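(* Consider the following constrained Bayesian persuasion setting. There is a finite state space $\Theta$, a finite action space $A=\{a_1,\dots,a_m\}$, a finite signal space $\Sigma$ with $|\Sigma|\ge |A|$, a common prior $\mu\in\Delta(\Theta)$, a sender utility $u_S:\Theta\times A\to\mathbb{R}$ and a receiver utility $u_R:\Theta\times A\to\mathbb{R}$. For each action $a_i$ there are bounds $0\le \ell_{a_i}\le h_{a_i}\le 1$, and these constraints are implementable, i.e. $\sum_i \ell_{a_i}\le 1\le \sum_i h_{a_i}$. Then for every signaling scheme $\hat\varphi:\Theta\to\Delta(\Sigma)$ there exists a signaling scheme $\varphi:\Theta\to\Delta(\Sigma)$ such that the sender's expected utility under $\varphi$ (against the receiver's constrained best response) is at least his expected utility under $\hat\varphi$ (against the receiver's constrained best response), and such that the receiver's constrained best response to $\varphi$ is deterministic (each signal is mapped to a single action with probability one). In particular, there exists a sender-optimal signaling scheme under which the receiver responds deterministically.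
   Context: A signaling scheme $\varphi:\Theta\to\Delta(\Sigma)$ is committed to by the sender before observing the state $\theta\sim\mu$; after observing $\theta$ the sender sends a signal $\sigma\sim\varphi(\theta)$. Write $\varphi(\sigma_j\mid\theta_i)$ for the probability of sending $\sigma_j$ in state $\theta_i$ and $\varphi(\sigma_j)=\sum_i\mu(\theta_i)\varphi(\sigma_j\mid\theta_i)$. A receiver strategy is a randomized mapping $\pi:\Sigma\to\Delta(A)$; write $\pi_{i j}$ for the probability that the receiver plays $a_i$ upon observing $\sigma_j$. The receiver is constrained: her strategy must satisfy, for every action $a_i$, $\ell_{a_i}\le \sum_j \varphi(\sigma_j)\,\pi_{ij}\le h_{a_i}$ (the probability of playing $a_i$, over the randomness of the state, the sender and the receiver, lies in $[\ell_{a_i},h_{a_i}]$). The receiver's (constrained) best response to $\varphi$ is a strategy satisfying these constraints that maximizes her expected utility $\mathbb{E}[u_R(\theta,a)]$ among all strategies satisfying the constraints, with ties broken in favor of the sender. The sender's expected utility under $\varphi$ is $\mathbb{E}_{\theta\sim\mu,\sigma\sim\varphi(\theta),a\sim\pi(\sigma)}[u_S(\theta,a)]$ with $\pi$ the receiver's best response; a sender-optimal scheme maximizes this quantity. *)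

theory Defs
  imports Complex_Main
begin

(* Prior mu :: 'th => real; signaling scheme phi :: 'th => 's => real
   (phi th s = probability of sending s in state th);
   receiver strategy rho :: 's => 'a => real (rho s a = prob. of playing a on s). *)

definition is_distr :: "('b::finite \<Rightarrow> real) \<Rightarrow> bool" where
  "is_distr p \<longleftrightarrow> (\<forall>x. 0 \<le> p x) \<and> (\<Sum>x\<in>UNIV. p x) = 1"

definition is_scheme :: "('th::finite \<Rightarrow> 's::finite \<Rightarrow> real) \<Rightarrow> bool" where
  "is_scheme phi \<longleftrightarrow> (\<forall>th. is_distr (phi th))"

definition is_strategy :: "('s::finite \<Rightarrow> 'a::finite \<Rightarrow> real) \<Rightarrow> bool" where
  "is_strategy rho \<longleftrightarrow> (\<forall>s. is_distr (rho s))"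

definition sig_prob :: "('th::finite \<Rightarrow> real) \<Rightarrow> ('th \<Rightarrow> 's \<Rightarrow> real) \<Rightarrow> 's \<Rightarrow> real" where
  "sig_prob mu phi s = (\<Sum>th\<in>UNIV. mu th * phi th s)"

definition feasible ::
  "('th::finite \<Rightarrow> real) \<Rightarrow> ('a::finite \<Rightarrow> real) \<Rightarrow> ('a \<Rightarrow> real) \<Rightarrow>
   ('th \<Rightarrow> 's::finite \<Rightarrow> real) \<Rightarrow> ('s \<Rightarrow> 'a \<Rightarrow> real) \<Rightarrow> bool" where
  "feasible mu l h phi rho \<longleftrightarrow> is_strategy rho \<and>
     (\<forall>a. l a \<le> (\<Sum>s\<in>UNIV. sig_prob mu phi s * rho s a) \<and>
          (\<Sum>s\<in>UNIV. sig_prob mu phi s * rho s a) \<le> h a)"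

definition exp_util ::
  "('th::finite \<Rightarrow> real) \<Rightarrow> ('th \<Rightarrow> 'a::finite \<Rightarrow> real) \<Rightarrow>
   ('th \<Rightarrow> 's::finite \<Rightarrow> real) \<Rightarrow> ('s \<Rightarrow> 'a \<Rightarrow> real) \<Rightarrow> real" where
  "exp_util mu u phi rho =
     (\<Sum>th\<in>UNIV. \<Sum>s\<in>UNIV. \<Sum>a\<in>UNIV. mu th * phi th s * rho s a * u th a)"

(* receiver's constrained best response, ties broken in favour of the sender:
   rho is feasible, maximizes receiver utility among feasible strategies, and among
   the receiver-optimal feasible strategies maximizes the sender's utility *)
definition receiver_opt where
  "receiver_opt mu l h uR phi rho \<longleftrightarrow> feasible mu l h phi rho \<and>
     (\<forall>rho'. feasible mu l h phi rho' \<longrightarrow> exp_util mu uR phi rho' \<le> exp_util mu uR phi rho)"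

definition best_response where
  "best_response mu l h uS uR phi rho \<longleftrightarrow> receiver_opt mu l h uR phi rho \<and>
     (\<forall>rho'. receiver_opt mu l h uR phi rho' \<longrightarrow> exp_util mu uS phi rho' \<le> exp_util mu uS phi rho)"

definition deterministic :: "('s \<Rightarrow> 'a \<Rightarrow> real) \<Rightarrow> bool" where
  "deterministic rho \<longleftrightarrow> (\<forall>s. \<exists>a. rho s a = 1)"

end

theory Submission
  imports Defs
begin

text \<open>A revelation-principle argument. Encode the actions injectively as signals and let the
  new scheme send the code of the action the receiver would have played against the old scheme.
  Every strategy against the new scheme is simulated by a strategy against the old one (play the
  old response, encode it, then apply the new strategy) with the same utilities for both players
  and the same action marginals. Obeying the recommendation simulates the old best response itself,
  so it is again a constrained best response, with the same tie-breaking and the same sender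
  utility.\<close>

definition action_prob :: "('th::finite \<Rightarrow> 's::finite \<Rightarrow> real) \<Rightarrow> ('s \<Rightarrow> 'a \<Rightarrow> real) \<Rightarrow> 'th \<Rightarrow> 'a \<Rightarrow> real"
  where "action_prob phi rho th a = (\<Sum>s\<in>UNIV. phi th s * rho s a)"

definition recommendation_scheme ::
  "('th::finite \<Rightarrow> 's::finite \<Rightarrow> real) \<Rightarrow> ('s \<Rightarrow> 'a::finite \<Rightarrow> real) \<Rightarrow> ('a \<Rightarrow> 's) \<Rightarrow> 'th \<Rightarrow> 's \<Rightarrow> real"
  where "recommendation_scheme phi rho g th s = (\<Sum>a | g a = s. action_prob phi rho th a)"

definition composed_strategy ::
  "('s \<Rightarrow> 'a::finite \<Rightarrow> real) \<Rightarrow> ('a \<Rightarrow> 's) \<Rightarrow> ('s \<Rightarrow> 'b \<Rightarrow> real) \<Rightarrow> 's \<Rightarrow> 'b \<Rightarrow> real"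
  where "composed_strategy rho g r s b = (\<Sum>a\<in>UNIV. rho s a * r (g a) b)"

text \<open>Off the range of \<^term>\<open>g\<close>, \<^term>\<open>inv g s\<close> is an arbitrary action; such
  signals are never sent by the recommendation scheme.\<close>

definition obey_strategy :: "('a \<Rightarrow> 's) \<Rightarrow> 's \<Rightarrow> 'a \<Rightarrow> real"
  where "obey_strategy g s a = (if a = inv g s then 1 else 0)"

lemma exp_util_nested:
  "exp_util mu u phi r = (\<Sum>th\<in>UNIV. mu th * (\<Sum>s\<in>UNIV. phi th s * (\<Sum>b\<in>UNIV. r s b * u th b)))"
  unfolding exp_util_def by (simp add: sum_distrib_left mult_ac)

lemma sum_sig_prob:
  "(\<Sum>s\<in>UNIV. sig_prob mu phi s * F s) = (\<Sum>th\<in>UNIV. mu th * (\<Sum>s\<in>UNIV. phi th s * F s))"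
  unfolding sig_prob_def sum_distrib_left sum_distrib_right
  by (subst sum.swap) (simp add: mult.assoc)

lemma sum_action_prob:
  "(\<Sum>a\<in>UNIV. action_prob phi rho th a * F a) = (\<Sum>s\<in>UNIV. phi th s * (\<Sum>a\<in>UNIV. rho s a * F a))"
  unfolding action_prob_def sum_distrib_left sum_distrib_right
  by (subst sum.swap) (simp add: mult.assoc)

lemma sum_composed_strategy:
  "(\<Sum>b\<in>UNIV. composed_strategy rho g r s b * F b) = (\<Sum>a\<in>UNIV. rho s a * (\<Sum>b\<in>UNIV. r (g a) b * F b))"
  unfolding composed_strategy_def sum_distrib_left sum_distrib_right
  by (subst sum.swap) (simp add: mult.assoc)

lemma sum_recommendation_scheme:
  "(\<Sum>s\<in>UNIV. recommendation_scheme phi rho g th s * F s) = (\<Sum>a\<in>UNIV. action_prob phi rho th a * F (g a))"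
proof -
  have "(\<Sum>s\<in>UNIV. recommendation_scheme phi rho g th s * F s)
      = (\<Sum>s\<in>UNIV. \<Sum>a | g a = s. action_prob phi rho th a * F (g a))"
    unfolding recommendation_scheme_def sum_distrib_right by (intro sum.cong) auto
  also have "\<dots> = (\<Sum>a\<in>UNIV. action_prob phi rho th a * F (g a))"
    using sum.group[of UNIV UNIV g "\<lambda>a. action_prob phi rho th a * F (g a)"] by simp
  finally show ?thesis .
qed

lemma exp_util_recommendation_scheme:
  "exp_util mu u (recommendation_scheme phi rho g) r = exp_util mu u phi (composed_strategy rho g r)"
  unfolding exp_util_nested
  by (simp add: sum_recommendation_scheme sum_action_prob sum_composed_strategy)

lemma action_marginal_recommendation_scheme:
  "(\<Sum>s\<in>UNIV. sig_prob mu (recommendation_scheme phi rho g) s * r s b)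
     = (\<Sum>s\<in>UNIV. sig_prob mu phi s * composed_strategy rho g r s b)"
  unfolding sum_sig_prob
  by (simp add: sum_recommendation_scheme sum_action_prob composed_strategy_def)

lemma is_strategy_composed_strategy:
  assumes "is_strategy rho" and "is_strategy r"
  shows "is_strategy (composed_strategy rho g r)"
  unfolding is_strategy_def is_distr_def
proof (intro allI conjI)
  fix s b
  show "0 \<le> composed_strategy rho g r s b"
    using assms unfolding composed_strategy_def is_strategy_def is_distr_def by (simp add: sum_nonneg)
next
  fix s
  have "(\<Sum>b\<in>UNIV. composed_strategy rho g r s b) = (\<Sum>a\<in>UNIV. rho s a * (\<Sum>b\<in>UNIV. r (g a) b))"
    using sum_composed_strategy[where F = "\<lambda>_. 1"] by simp
  also have "\<dots> = 1"
    using assms unfolding is_strategy_def is_distr_def by simp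
  finally show "(\<Sum>b\<in>UNIV. composed_strategy rho g r s b) = 1" .
qed

lemma is_scheme_recommendation_scheme:
  assumes "is_scheme phi" and "is_strategy rho"
  shows "is_scheme (recommendation_scheme phi rho g)"
  unfolding is_scheme_def is_distr_def
proof (intro allI conjI)
  fix th s
  show "0 \<le> recommendation_scheme phi rho g th s"
    using assms unfolding recommendation_scheme_def action_prob_def is_scheme_def is_strategy_def is_distr_def
    by (intro sum_nonneg) (simp add: sum_nonneg)
next
  fix th
  have "(\<Sum>s\<in>UNIV. recommendation_scheme phi rho g th s) = (\<Sum>s\<in>UNIV. phi th s * (\<Sum>a\<in>UNIV. rho s a))"
    using sum_recommendation_scheme[of phi rho g th "\<lambda>_. 1"] sum_action_prob[of phi rho th "\<lambda>_. 1"]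
    by simp
  also have "\<dots> = 1"
    using assms unfolding is_scheme_def is_strategy_def is_distr_def by simp
  finally show "(\<Sum>s\<in>UNIV. recommendation_scheme phi rho g th s) = 1" .
qed

lemma feasible_recommendation_scheme_iff:
  assumes "is_strategy rho"
  shows "feasible mu l h (recommendation_scheme phi rho g) r
           \<longleftrightarrow> is_strategy r \<and> feasible mu l h phi (composed_strategy rho g r)"
  unfolding feasible_def action_marginal_recommendation_scheme
  using is_strategy_composed_strategy[OF assms] by blast

lemma composed_strategy_obey:
  assumes "inj g"
  shows "composed_strategy rho g (obey_strategy g) = rho"
  using assms by (intro ext) (simp add: composed_strategy_def obey_strategy_def if_distrib cong: if_cong)

lemma is_strategy_obey_strategy: "is_strategy (obey_strategy g)"
  unfolding is_strategy_def is_distr_def obey_strategy_def by simp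

lemma deterministic_obey_strategy: "deterministic (obey_strategy g)"
  unfolding deterministic_def obey_strategy_def by auto

lemma best_response_simulation:
  assumes util: "\<And>u r. exp_util mu u phi r = exp_util mu u phi' (T r)"
    and feas: "\<And>r. feasible mu l h phi r \<longleftrightarrow> is_strategy r \<and> feasible mu l h phi' (T r)"
    and "is_strategy rho" and T_rho: "T rho = rho'"
    and br: "best_response mu l h uS uR phi' rho'"
  shows "best_response mu l h uS uR phi rho"
proof -
  have opt': "receiver_opt mu l h uR phi' rho'"
    using br unfolding best_response_def by blast
  have feas_rho: "feasible mu l h phi rho"
    using feas[of rho] \<open>is_strategy rho\<close> opt' unfolding receiver_opt_def T_rho by blast
  have opt: "receiver_opt mu l h uR phi rho"
    unfolding receiver_opt_def
  proof (intro conjI allI impI feas_rho)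
    fix r assume "feasible mu l h phi r"
    then have "feasible mu l h phi' (T r)"
      using feas[of r] by blast
    then show "exp_util mu uR phi r \<le> exp_util mu uR phi rho"
      using opt' unfolding receiver_opt_def util T_rho by blast
  qed
  have "exp_util mu uS phi r \<le> exp_util mu uS phi rho" if opt_r: "receiver_opt mu l h uR phi r" for r
  proof -
    have "receiver_opt mu l h uR phi' (T r)"
      unfolding receiver_opt_def
    proof (intro conjI allI impI)
      show "feasible mu l h phi' (T r)"
        using opt_r feas[of r] unfolding receiver_opt_def by blast
      fix r' assume "feasible mu l h phi' r'"
      then have "exp_util mu uR phi' r' \<le> exp_util mu uR phi' rho'"
        using opt' unfolding receiver_opt_def by blast
      also have "\<dots> = exp_util mu uR phi rho"
        by (simp add: util T_rho)
      also have "\<dots> \<le> exp_util mu uR phi r"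
        using opt_r feas_rho unfolding receiver_opt_def by blast
      also have "\<dots> = exp_util mu uR phi' (T r)"
        by (rule util)
      finally show "exp_util mu uR phi' r' \<le> exp_util mu uR phi' (T r)" .
    qed
    then show ?thesis
      using br unfolding best_response_def util T_rho by blast
  qed
  with opt show ?thesis
    unfolding best_response_def by blast
qed

theorem proposition1:
  fixes mu :: "'th::finite \<Rightarrow> real"
    and uS uR :: "'th \<Rightarrow> 'a::finite \<Rightarrow> real"
    and l h :: "'a \<Rightarrow> real"
    and phi_hat :: "'th \<Rightarrow> 's::finite \<Rightarrow> real"
    and rho_hat :: "'s \<Rightarrow> 'a \<Rightarrow> real"
  assumes "card (UNIV :: 'a set) \<le> card (UNIV :: 's set)"
    and "is_distr mu"
    and "\<And>a. 0 \<le> l a" and "\<And>a. l a \<le> h a" and "\<And>a. h a \<le> 1"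
    and "(\<Sum>a\<in>UNIV. l a) \<le> 1" and "1 \<le> (\<Sum>a\<in>UNIV. h a)"
    and "is_scheme phi_hat"
    and "best_response mu l h uS uR phi_hat rho_hat"
  shows "\<exists>(phi :: 'th \<Rightarrow> 's \<Rightarrow> real) rho. is_scheme phi \<and> best_response mu l h uS uR phi rho \<and> deterministic rho \<and>
           exp_util mu uS phi_hat rho_hat \<le> exp_util mu uS phi rho"
proof -
  obtain g :: "'a \<Rightarrow> 's" where "inj g"
    using assms(1) by (meson card_le_inj finite_UNIV inj_on_iff_surj subset_UNIV)
  have "is_strategy rho_hat"
    using assms(9) unfolding best_response_def receiver_opt_def feasible_def by blast
  let ?phi = "recommendation_scheme phi_hat rho_hat g"
  have "best_response mu l h uS uR ?phi (obey_strategy g)"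
    by (rule best_response_simulation[OF exp_util_recommendation_scheme
          feasible_recommendation_scheme_iff[OF \<open>is_strategy rho_hat\<close>]
          is_strategy_obey_strategy composed_strategy_obey[OF \<open>inj g\<close>] assms(9)])
  moreover have "exp_util mu uS ?phi (obey_strategy g) = exp_util mu uS phi_hat rho_hat"
    by (simp add: exp_util_recommendation_scheme composed_strategy_obey[OF \<open>inj g\<close>])
  ultimately show ?thesis
    using is_scheme_recommendation_scheme[OF assms(8) \<open>is_strategy rho_hat\<close>] deterministic_obey_strategy
    by (intro exI[of _ ?phi] exI[of _ "obey_strategy g"]) simp
qed

end
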